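(* Let $A\in\mathscr{C}^-$, $B\in\mathscr{C}$ and $f\in\mathscr{C}(A,B)$. Choose a distinguished triangle $S_A[-1]\overset{s_A}{\to}A\overset{w_A}{\to}W_A\to S_A$ with $S_A\in\mathcal{S}$, $W_A\in\mathcal{W}$, and then a distinguished triangle $S_A[-1]\overset{f\circ s_A}{\to}B\overset{m_f}{\to}M_f\to S_A$. Then: (1) $\underline{m}_f\circ\underline{f}=0$ in $\underline{\mathscr{C}}$; (2) for every $Y\in\mathscr{C}^+$, composition with $\underline{m}_f$ gives a bijection \[ -\circ\underline{m}_f\colon\underline{\mathscr{C}}(M_f,Y)\to\{\beta\in\underline{\mathscr{C}}(B,Y)\mid\beta\circ\underline{f}=0\}; \] (3) if $B\in\mathscr{C}^-$, then $M_f\in\mathscr{C}^-$.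
   Context: $\mathscr{C}$ is a triangulated category with shift $[1]$; subcategories are full, additive, closed under isomorphisms and direct summands. $\mathrm{Ext}^1(X,Y)=\mathscr{C}(X,Y[1])$. $\mathcal{M}\ast\mathcal{N}$ is the full subcategory of objects $C$ admitting a distinguished triangle $M\to C\to N\to M[1]$ with $M\in\mathcal{M}$, $N\in\mathcal{N}$. A cotorsion pair $(\mathcal{U},\mathcal{V})$: $\mathrm{Ext}^1(\mathcal{U},\mathcal{V})=0$ and $\mathscr{C}=\mathcal{U}\ast\mathcal{V}[1]$. Fix a twin cotorsion pair, i.e. cotorsion pairs $(\mathcal{S},\mathcal{T}),(\mathcal{U},\mathcal{V})$ with $\mathrm{Ext}^1(\mathcal{S},\mathcal{V})=0$. Put $\mathcal{W}=\mathcal{T}\cap\mathcal{U}$, $\mathscr{C}^-=\mathcal{S}[-1]\ast\mathcal{W}$, $\mathscr{C}^+=\mathcal{W}\ast\mathcal{V}[1]$. $\underline{\mathscr{C}}$ is the ideal quotient of $\mathscr{C}$ by morphisms factoring through objects of $\mathcal{W}$, and $\underline{f}$ denotes the image of $f$. *)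

theory Defs
  imports Main
begin

text \<open>A category with objects of type 'o and morphisms of type 'm, each morphism
carrying its domain and codomain; composition tcmp g f means g after f.
Hom-groups: addition tpls, zero morphisms tzr X Y, negation tng.
Shift functor: tsh on objects, tshm on morphisms. ttri: the distinguished triangles
(u,v,w) of shape X -u-> Y -v-> Z -w-> X[1].\<close>

record ('o, 'm) tcat =
  tobj :: "'o set"
  tmor :: "'m set"
  tdm  :: "'m \<Rightarrow> 'o"
  tcd  :: "'m \<Rightarrow> 'o"
  tcmp :: "'m \<Rightarrow> 'm \<Rightarrow> 'm"
  tid  :: "'o \<Rightarrow> 'm"
  tpls :: "'m \<Rightarrow> 'm \<Rightarrow> 'm"
  tzr  :: "'o \<Rightarrow> 'o \<Rightarrow> 'm"
  tng  :: "'m \<Rightarrow> 'm"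
  tsh  :: "'o \<Rightarrow> 'o"
  tshm :: "'m \<Rightarrow> 'm"
  ttri :: "('m \<times> 'm \<times> 'm) set"

definition hom :: "('o,'m) tcat \<Rightarrow> 'o \<Rightarrow> 'o \<Rightarrow> 'm set" where
  "hom C X Y = {f \<in> tmor C. tdm C f = X \<and> tcd C f = Y}"

definition category_ax :: "('o,'m) tcat \<Rightarrow> bool" where
  "category_ax C \<longleftrightarrow>
     (\<forall>f\<in>tmor C. tdm C f \<in> tobj C \<and> tcd C f \<in> tobj C) \<and>
     (\<forall>X\<in>tobj C. tid C X \<in> hom C X X) \<and>
     (\<forall>f\<in>tmor C. \<forall>g\<in>tmor C. tcd C f = tdm C g \<longrightarrow>
         tcmp C g f \<in> hom C (tdm C f) (tcd C g)) \<and>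
     (\<forall>f\<in>tmor C. \<forall>g\<in>tmor C. \<forall>h\<in>tmor C. tcd C f = tdm C g \<and> tcd C g = tdm C h \<longrightarrow>
         tcmp C h (tcmp C g f) = tcmp C (tcmp C h g) f) \<and>
     (\<forall>f\<in>tmor C. tcmp C f (tid C (tdm C f)) = f \<and> tcmp C (tid C (tcd C f)) f = f)"

definition preadditive_ax :: "('o,'m) tcat \<Rightarrow> bool" where
  "preadditive_ax C \<longleftrightarrow>
     (\<forall>X\<in>tobj C. \<forall>Y\<in>tobj C.
        tzr C X Y \<in> hom C X Y \<and>
        (\<forall>f\<in>hom C X Y. \<forall>g\<in>hom C X Y. tpls C f g \<in> hom C X Y \<and> tpls C f g = tpls C g f) \<and>
        (\<forall>f\<in>hom C X Y. \<forall>g\<in>hom C X Y. \<forall>h\<in>hom C X Y.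
            tpls C (tpls C f g) h = tpls C f (tpls C g h)) \<and>
        (\<forall>f\<in>hom C X Y. tng C f \<in> hom C X Y \<and> tpls C f (tng C f) = tzr C X Y
            \<and> tpls C f (tzr C X Y) = f)) \<and>
     (\<forall>X\<in>tobj C. \<forall>Y\<in>tobj C. \<forall>Z\<in>tobj C.
        (\<forall>f\<in>hom C X Y. \<forall>f'\<in>hom C X Y. \<forall>g\<in>hom C Y Z.
            tcmp C g (tpls C f f') = tpls C (tcmp C g f) (tcmp C g f')) \<and>
        (\<forall>f\<in>hom C X Y. \<forall>g\<in>hom C Y Z. \<forall>g'\<in>hom C Y Z.
            tcmp C (tpls C g g') f = tpls C (tcmp C g f) (tcmp C g' f)))"

definition is_zero_obj :: "('o,'m) tcat \<Rightarrow> 'o \<Rightarrow> bool" where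
  "is_zero_obj C Z \<longleftrightarrow> Z \<in> tobj C \<and> tid C Z = tzr C Z Z"

definition is_biprod :: "('o,'m) tcat \<Rightarrow> 'o \<Rightarrow> 'o \<Rightarrow> 'o \<Rightarrow> 'm \<Rightarrow> 'm \<Rightarrow> 'm \<Rightarrow> 'm \<Rightarrow> bool" where
  "is_biprod C P X Y i1 i2 p1 p2 \<longleftrightarrow>
     P \<in> tobj C \<and> X \<in> tobj C \<and> Y \<in> tobj C \<and>
     i1 \<in> hom C X P \<and> i2 \<in> hom C Y P \<and> p1 \<in> hom C P X \<and> p2 \<in> hom C P Y \<and>
     tcmp C p1 i1 = tid C X \<and> tcmp C p2 i2 = tid C Y \<and>
     tcmp C p1 i2 = tzr C Y X \<and> tcmp C p2 i1 = tzr C X Y \<and>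
     tpls C (tcmp C i1 p1) (tcmp C i2 p2) = tid C P"

definition additive_ax :: "('o,'m) tcat \<Rightarrow> bool" where
  "additive_ax C \<longleftrightarrow> category_ax C \<and> preadditive_ax C \<and> (\<exists>Z. is_zero_obj C Z) \<and>
     (\<forall>X\<in>tobj C. \<forall>Y\<in>tobj C. \<exists>P i1 i2 p1 p2. is_biprod C P X Y i1 i2 p1 p2)"

definition is_iso :: "('o,'m) tcat \<Rightarrow> 'm \<Rightarrow> bool" where
  "is_iso C f \<longleftrightarrow> f \<in> tmor C \<and> (\<exists>g\<in>hom C (tcd C f) (tdm C f).
      tcmp C g f = tid C (tdm C f) \<and> tcmp C f g = tid C (tcd C f))"

definition isomorphic :: "('o,'m) tcat \<Rightarrow> 'o \<Rightarrow> 'o \<Rightarrow> bool" where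
  "isomorphic C X Y \<longleftrightarrow> (\<exists>f\<in>hom C X Y. is_iso C f)"

definition shift_ax :: "('o,'m) tcat \<Rightarrow> bool" where
  "shift_ax C \<longleftrightarrow>
     (\<forall>X\<in>tobj C. tsh C X \<in> tobj C) \<and>
     (\<forall>f\<in>tmor C. tshm C f \<in> hom C (tsh C (tdm C f)) (tsh C (tcd C f))) \<and>
     (\<forall>f\<in>tmor C. \<forall>g\<in>tmor C. tcd C f = tdm C g \<longrightarrow>
         tshm C (tcmp C g f) = tcmp C (tshm C g) (tshm C f)) \<and>
     (\<forall>X\<in>tobj C. tshm C (tid C X) = tid C (tsh C X)) \<and>
     (\<forall>X\<in>tobj C. \<forall>Y\<in>tobj C. \<forall>f\<in>hom C X Y. \<forall>g\<in>hom C X Y.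
         tshm C (tpls C f g) = tpls C (tshm C f) (tshm C g)) \<and>
     (\<forall>X\<in>tobj C. \<forall>Y\<in>tobj C. \<forall>g\<in>hom C (tsh C X) (tsh C Y). \<exists>f\<in>hom C X Y. tshm C f = g) \<and>
     (\<forall>X\<in>tobj C. \<forall>Y\<in>tobj C. inj_on (tshm C) (hom C X Y)) \<and>
     (\<forall>Y\<in>tobj C. \<exists>X\<in>tobj C. isomorphic C (tsh C X) Y)"

definition tri_shape :: "('o,'m) tcat \<Rightarrow> 'm \<times> 'm \<times> 'm \<Rightarrow> bool" where
  "tri_shape C t = (case t of (u, v, w) \<Rightarrow>
     u \<in> tmor C \<and> v \<in> tmor C \<and> w \<in> tmor C \<and> tcd C u = tdm C v \<and> tcd C v = tdm C w \<and>
     tcd C w = tsh C (tdm C u))"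

definition tri_morph :: "('o,'m) tcat \<Rightarrow> 'm \<times> 'm \<times> 'm \<Rightarrow> 'm \<times> 'm \<times> 'm \<Rightarrow> 'm \<Rightarrow> 'm \<Rightarrow> 'm \<Rightarrow> bool" where
  "tri_morph C t t' a b c = (case t of (u, v, w) \<Rightarrow> case t' of (u', v', w') \<Rightarrow>
     a \<in> hom C (tdm C u) (tdm C u') \<and> b \<in> hom C (tcd C u) (tcd C u') \<and>
     c \<in> hom C (tcd C v) (tcd C v') \<and>
     tcmp C b u = tcmp C u' a \<and> tcmp C c v = tcmp C v' b \<and>
     tcmp C (tshm C a) w = tcmp C w' c)"

definition triangulated :: "('o,'m) tcat \<Rightarrow> bool" where
  "triangulated C \<longleftrightarrow> additive_ax C \<and> shift_ax C \<and>
     (\<forall>t\<in>ttri C. tri_shape C t) \<and>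
     \<comment> \<open>TR1\<close>
     (\<forall>t t' a b c. t \<in> ttri C \<and> tri_shape C t' \<and> tri_morph C t t' a b c \<and>
         is_iso C a \<and> is_iso C b \<and> is_iso C c \<longrightarrow> t' \<in> ttri C) \<and>
     (\<forall>X\<in>tobj C. \<forall>Z. is_zero_obj C Z \<longrightarrow>
         (tid C X, tzr C X Z, tzr C Z (tsh C X)) \<in> ttri C) \<and>
     (\<forall>u\<in>tmor C. \<exists>v w. (u, v, w) \<in> ttri C) \<and>
     \<comment> \<open>TR2\<close>
     (\<forall>u v w. tri_shape C (u, v, w) \<longrightarrow>
         ((u, v, w) \<in> ttri C \<longleftrightarrow> (v, w, tng C (tshm C u)) \<in> ttri C)) \<and>
     \<comment> \<open>TR3\<close>
     (\<forall>u v w u' v' w' a b. (u, v, w) \<in> ttri C \<and> (u', v', w') \<in> ttri C \<and>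
         a \<in> hom C (tdm C u) (tdm C u') \<and> b \<in> hom C (tcd C u) (tcd C u') \<and>
         tcmp C b u = tcmp C u' a \<longrightarrow>
         (\<exists>c. tri_morph C (u, v, w) (u', v', w') a b c)) \<and>
     \<comment> \<open>TR4 (octahedral axiom)\<close>
     (\<forall>u v j k l i m n. u \<in> tmor C \<and> v \<in> tmor C \<and> tcd C u = tdm C v \<and>
         (u, j, k) \<in> ttri C \<and> (v, l, i) \<in> ttri C \<and> (tcmp C v u, m, n) \<in> ttri C \<longrightarrow>
         (\<exists>f g. (f, g, tcmp C (tshm C j) i) \<in> ttri C \<and>
             tcmp C f j = tcmp C m v \<and> tcmp C n f = k \<and>
             tcmp C g m = l \<and> tcmp C i g = tcmp C (tshm C u) n))"

text \<open>Full additive subcategory closed under isomorphisms and direct summands,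
given by its set of objects.\<close>
definition subcat :: "('o,'m) tcat \<Rightarrow> 'o set \<Rightarrow> bool" where
  "subcat C D \<longleftrightarrow> D \<subseteq> tobj C \<and> (\<exists>Z\<in>D. is_zero_obj C Z) \<and>
     (\<forall>X\<in>D. \<forall>Y. isomorphic C X Y \<longrightarrow> Y \<in> D) \<and>
     (\<forall>P X Y i1 i2 p1 p2. is_biprod C P X Y i1 i2 p1 p2 \<longrightarrow>
         (P \<in> D \<longleftrightarrow> X \<in> D \<and> Y \<in> D))"

definition ext1_zero :: "('o,'m) tcat \<Rightarrow> 'o set \<Rightarrow> 'o set \<Rightarrow> bool" where
  "ext1_zero C D E \<longleftrightarrow> (\<forall>X\<in>D. \<forall>Y\<in>E. hom C X (tsh C Y) = {tzr C X (tsh C Y)})"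

definition star :: "('o,'m) tcat \<Rightarrow> 'o set \<Rightarrow> 'o set \<Rightarrow> 'o set" where
  "star C M N = {Z \<in> tobj C. \<exists>u v w. (u, v, w) \<in> ttri C \<and>
       tdm C u \<in> M \<and> tcd C u = Z \<and> tcd C v \<in> N}"

definition shift_inv :: "('o,'m) tcat \<Rightarrow> 'o set \<Rightarrow> 'o set" where
  "shift_inv C D = {X \<in> tobj C. tsh C X \<in> D}"

definition cotorsion_pair :: "('o,'m) tcat \<Rightarrow> 'o set \<Rightarrow> 'o set \<Rightarrow> bool" where
  "cotorsion_pair C U V \<longleftrightarrow> subcat C U \<and> subcat C V \<and> ext1_zero C U V \<and>
     tobj C = star C U (tsh C ` V)"

definition twin_cotorsion_pair :: "('o,'m) tcat \<Rightarrow> 'o set \<Rightarrow> 'o set \<Rightarrow> 'o set \<Rightarrow> 'o set \<Rightarrow> bool" where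
  "twin_cotorsion_pair C S T U V \<longleftrightarrow>
     cotorsion_pair C S T \<and> cotorsion_pair C U V \<and> ext1_zero C S V"

definition Cminus :: "('o,'m) tcat \<Rightarrow> 'o set \<Rightarrow> 'o set \<Rightarrow> 'o set \<Rightarrow> 'o set" where
  "Cminus C S T U = star C (shift_inv C S) (T \<inter> U)"

definition Cplus :: "('o,'m) tcat \<Rightarrow> 'o set \<Rightarrow> 'o set \<Rightarrow> 'o set \<Rightarrow> 'o set" where
  "Cplus C T U V = star C (T \<inter> U) (tsh C ` V)"

definition factors_through :: "('o,'m) tcat \<Rightarrow> 'o set \<Rightarrow> 'm \<Rightarrow> bool" where
  "factors_through C D f \<longleftrightarrow> (\<exists>Z\<in>D. \<exists>a\<in>hom C (tdm C f) Z. \<exists>b\<in>hom C Z (tcd C f). f = tcmp C b a)"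

definition stab_rel :: "('o,'m) tcat \<Rightarrow> 'o set \<Rightarrow> 'o \<Rightarrow> 'o \<Rightarrow> ('m \<times> 'm) set" where
  "stab_rel C D X Y = {(f, g). f \<in> hom C X Y \<and> g \<in> hom C X Y \<and>
       factors_through C D (tpls C f (tng C g))}"

definition qhom :: "('o,'m) tcat \<Rightarrow> 'o set \<Rightarrow> 'o \<Rightarrow> 'o \<Rightarrow> 'm set set" where
  "qhom C D X Y = hom C X Y // stab_rel C D X Y"

definition qcls :: "('o,'m) tcat \<Rightarrow> 'o set \<Rightarrow> 'm \<Rightarrow> 'm set" where
  "qcls C D f = stab_rel C D (tdm C f) (tcd C f) `` {f}"

definition qcmp :: "('o,'m) tcat \<Rightarrow> 'o set \<Rightarrow> 'm set \<Rightarrow> 'm set \<Rightarrow> 'm set" where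
  "qcmp C D \<beta> \<alpha> = the_elem {qcls C D (tcmp C b a) | b a. b \<in> \<beta> \<and> a \<in> \<alpha>}"

end

theory Submission
  imports Defs
begin

text \<open>Write W = T \<inter> U. Since mf f sA = 0, the triangle (sA, wA, tA) makes mf f factor through
  wA, hence through W. A map b : B \<rightarrow> Y for which b f factors through some W0 \<in> W kills f sA,
  because maps from X (with X[1] \<in> S) into W0 \<in> T vanish; so b factors through the weak cokernel
  mf of f sA. Conversely, if g mf factors through W then, up to a map through W, g kills mf and so
  factors through the connecting map MF \<rightarrow> X[1]; for Y \<in> C+ every map X[1] \<rightarrow> Y factors
  through W, since Ext1(S, V) = 0. Finally, (S, T) gives a triangle X' \<rightarrow> MF \<rightarrow> T1 \<rightarrow> X'[1]
  with X'[1] \<in> S and T1 \<in> T; when B \<in> C- every map T1 \<rightarrow> V'[1] with V' \<in> V vanishes,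
  so T1 \<in> U and MF \<in> C-.\<close>

locale triangulated_cat =
  fixes C :: "('o,'m) tcat"
  assumes triangulated: "triangulated C"
begin

abbreviation "Ob \<equiv> tobj C"
abbreviation "H \<equiv> hom C"
abbreviation "cp \<equiv> tcmp C"
abbreviation "idm \<equiv> tid C"
abbreviation "pl \<equiv> tpls C"
abbreviation "ng \<equiv> tng C"
abbreviation "zr \<equiv> tzr C"
abbreviation "sh \<equiv> tsh C"
abbreviation "shm \<equiv> tshm C"

section \<open>Additive structure\<close>

lemma category_axioms: "category_ax C"
  and preadditive_axioms: "preadditive_ax C"
  and shift_axioms: "shift_ax C"
  using triangulated by (auto simp: triangulated_def additive_ax_def)

lemma hom_dom: "f \<in> H X Y \<Longrightarrow> tdm C f = X" by (simp add: hom_def)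
lemma hom_cod: "f \<in> H X Y \<Longrightarrow> tcd C f = Y" by (simp add: hom_def)
lemma hom_mor: "f \<in> H X Y \<Longrightarrow> f \<in> tmor C" by (simp add: hom_def)

lemma hom_obj: "f \<in> H X Y \<Longrightarrow> X \<in> Ob \<and> Y \<in> Ob"
  using category_axioms unfolding category_ax_def hom_def by auto

lemma comp_hom[intro]: "f \<in> H X Y \<Longrightarrow> g \<in> H Y Z \<Longrightarrow> cp g f \<in> H X Z"
  using category_axioms unfolding category_ax_def hom_def by auto

lemma comp_assoc: "f \<in> H X Y \<Longrightarrow> g \<in> H Y Z \<Longrightarrow> h \<in> H Z W \<Longrightarrow> cp h (cp g f) = cp (cp h g) f"
  using category_axioms unfolding category_ax_def hom_def by auto

lemma id_hom[intro]: "X \<in> Ob \<Longrightarrow> idm X \<in> H X X"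
  using category_axioms unfolding category_ax_def by auto

lemma comp_id_right[simp]: "f \<in> H X Y \<Longrightarrow> cp f (idm X) = f"
  using category_axioms unfolding category_ax_def hom_def by auto

lemma comp_id_left[simp]: "f \<in> H X Y \<Longrightarrow> cp (idm Y) f = f"
  using category_axioms unfolding category_ax_def hom_def by auto

lemma zr_hom[intro]: "X \<in> Ob \<Longrightarrow> Y \<in> Ob \<Longrightarrow> zr X Y \<in> H X Y"
  using preadditive_axioms unfolding preadditive_ax_def by auto

lemma pl_hom[intro]: "f \<in> H X Y \<Longrightarrow> g \<in> H X Y \<Longrightarrow> pl f g \<in> H X Y"
  using preadditive_axioms hom_obj unfolding preadditive_ax_def by metis

lemma pl_comm: "f \<in> H X Y \<Longrightarrow> g \<in> H X Y \<Longrightarrow> pl f g = pl g f"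
  using preadditive_axioms hom_obj unfolding preadditive_ax_def by metis

lemma pl_assoc: "f \<in> H X Y \<Longrightarrow> g \<in> H X Y \<Longrightarrow> h \<in> H X Y \<Longrightarrow> pl (pl f g) h = pl f (pl g h)"
  using preadditive_axioms hom_obj unfolding preadditive_ax_def by metis

lemma ng_hom[intro]: "f \<in> H X Y \<Longrightarrow> ng f \<in> H X Y"
  using preadditive_axioms hom_obj unfolding preadditive_ax_def by metis

lemma pl_ng: "f \<in> H X Y \<Longrightarrow> pl f (ng f) = zr X Y"
  using preadditive_axioms hom_obj unfolding preadditive_ax_def by metis

lemma pl_zr: "f \<in> H X Y \<Longrightarrow> pl f (zr X Y) = f"
  using preadditive_axioms hom_obj unfolding preadditive_ax_def by metis

lemma zr_pl: "f \<in> H X Y \<Longrightarrow> pl (zr X Y) f = f"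
  by (metis hom_obj pl_comm pl_zr zr_hom)

lemma comp_pl_right:
  "f \<in> H X Y \<Longrightarrow> f' \<in> H X Y \<Longrightarrow> g \<in> H Y Z \<Longrightarrow> cp g (pl f f') = pl (cp g f) (cp g f')"
  using preadditive_axioms hom_obj unfolding preadditive_ax_def by metis

lemma comp_pl_left:
  "f \<in> H X Y \<Longrightarrow> g \<in> H Y Z \<Longrightarrow> g' \<in> H Y Z \<Longrightarrow> cp (pl g g') f = pl (cp g f) (cp g' f)"
  using preadditive_axioms hom_obj unfolding preadditive_ax_def by metis

lemma pl_idem_eq_zr: assumes a: "a \<in> H X Y" and e: "pl a a = a" shows "a = zr X Y"
proof -
  have "zr X Y = pl (pl a a) (ng a)" using pl_ng a e by simp
  also have "\<dots> = pl a (pl a (ng a))" using pl_assoc a by blast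
  also have "\<dots> = a" using a pl_ng pl_zr by simp
  finally show ?thesis by simp
qed

lemma comp_zr_right[simp]: assumes g: "g \<in> H Y Z" and X: "X \<in> Ob" shows "cp g (zr X Y) = zr X Z"
proof -
  have z: "zr X Y \<in> H X Y" using X g hom_obj by blast
  have "pl (cp g (zr X Y)) (cp g (zr X Y)) = cp g (zr X Y)"
    using comp_pl_right[OF z z g] pl_zr[OF z] by simp
  thus ?thesis using pl_idem_eq_zr z g by blast
qed

lemma comp_zr_left[simp]: assumes f: "f \<in> H X Y" and Z: "Z \<in> Ob" shows "cp (zr Y Z) f = zr X Z"
proof -
  have z: "zr Y Z \<in> H Y Z" using Z f hom_obj by blast
  have "pl (cp (zr Y Z) f) (cp (zr Y Z) f) = cp (zr Y Z) f"
    using comp_pl_left[OF f z z] pl_zr[OF z] by simp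
  thus ?thesis using pl_idem_eq_zr z f by blast
qed

lemma ng_unique: assumes a: "a \<in> H X Y" and b: "b \<in> H X Y" and e: "pl a b = zr X Y" shows "b = ng a"
proof -
  have na: "ng a \<in> H X Y" using a by blast
  have "b = pl (pl (ng a) a) b" using zr_pl[OF b] pl_ng[OF a] pl_comm[OF na a] by simp
  also have "\<dots> = ng a" using pl_assoc[OF na a b] e pl_zr[OF na] by simp
  finally show ?thesis .
qed

lemma ng_ng[simp]: "a \<in> H X Y \<Longrightarrow> ng (ng a) = a"
  by (metis ng_unique ng_hom pl_comm pl_ng)

lemma ng_zr[simp]: "X \<in> Ob \<Longrightarrow> Y \<in> Ob \<Longrightarrow> ng (zr X Y) = zr X Y"
  by (metis ng_unique pl_zr zr_hom)

lemma eq_of_diff_eq_zr: assumes a: "a \<in> H X Y" and b: "b \<in> H X Y" and e: "pl a (ng b) = zr X Y"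
  shows "a = b"
  by (metis a b e ng_unique ng_hom ng_ng)

lemma diff_zr: "a \<in> H X Y \<Longrightarrow> pl a (ng (zr X Y)) = a"
  by (metis hom_obj ng_zr pl_zr)

lemma diff_trans: assumes a: "a \<in> H X Y" and b: "b \<in> H X Y" and c: "c \<in> H X Y"
  shows "pl (pl a (ng b)) (pl b (ng c)) = pl a (ng c)"
proof -
  have nb: "ng b \<in> H X Y" and nc: "ng c \<in> H X Y" using b c by auto
  have "pl (pl a (ng b)) (pl b (ng c)) = pl a (pl (pl (ng b) b) (ng c))"
    using pl_assoc[OF a nb pl_hom[OF b nc]] pl_assoc[OF nb b nc] by simp
  also have "pl (ng b) b = zr X Y" using pl_ng[OF b] pl_comm[OF nb b] by simp
  finally show ?thesis using zr_pl[OF nc] by simp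
qed

lemma ng_diff: assumes a: "a \<in> H X Y" and b: "b \<in> H X Y" shows "ng (pl a (ng b)) = pl b (ng a)"
  using diff_trans[OF a b a] pl_ng[OF a] ng_unique a b by (metis ng_hom pl_hom)

lemma pl_diff_cancel: assumes a: "a \<in> H X Y" and b: "b \<in> H X Y" shows "pl a (pl b (ng a)) = b"
proof -
  have na: "ng a \<in> H X Y" using a by blast
  have "pl a (pl b (ng a)) = pl (pl a (ng a)) b"
    using pl_comm[OF b na] pl_assoc[OF a na b] by simp
  thus ?thesis using pl_ng[OF a] zr_pl[OF b] by simp
qed

lemma comp_ng_left: assumes f: "f \<in> H X Y" and g: "g \<in> H Y Z" shows "cp (ng g) f = ng (cp g f)"
proof -
  have "pl (cp g f) (cp (ng g) f) = zr X Z"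
    using comp_pl_left[OF f g ng_hom[OF g]] pl_ng[OF g] comp_zr_left f g hom_obj by metis
  thus ?thesis using ng_unique f g comp_hom ng_hom by blast
qed

lemma comp_ng_right: assumes f: "f \<in> H X Y" and g: "g \<in> H Y Z" shows "cp g (ng f) = ng (cp g f)"
proof -
  have "pl (cp g f) (cp g (ng f)) = zr X Z"
    using comp_pl_right[OF f ng_hom[OF f] g] pl_ng[OF f] comp_zr_right f g hom_obj by metis
  thus ?thesis using ng_unique f g comp_hom ng_hom by blast
qed

lemma zero_obj_obj: "is_zero_obj C Z \<Longrightarrow> Z \<in> Ob" by (simp add: is_zero_obj_def)

lemma zero_obj_exists: "\<exists>Z. is_zero_obj C Z"
  using triangulated by (auto simp: triangulated_def additive_ax_def)

lemma zero_obj_hom_from: "is_zero_obj C Z \<Longrightarrow> f \<in> H Z Y \<Longrightarrow> f = zr Z Y"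
  unfolding is_zero_obj_def by (metis comp_zr_right hom_obj comp_id_right)

lemma zero_objs_isomorphic: assumes z: "is_zero_obj C Z" and z': "is_zero_obj C Z'"
  shows "isomorphic C Z Z'"
proof -
  have Zo: "Z \<in> Ob" and Z'o: "Z' \<in> Ob" using z z' zero_obj_obj by auto
  have f: "zr Z Z' \<in> H Z Z'" and g: "zr Z' Z \<in> H Z' Z" using Zo Z'o by auto
  have "cp (zr Z' Z) (zr Z Z') = idm Z" using comp_zr_left[OF f Zo] z unfolding is_zero_obj_def by simp
  moreover have "cp (zr Z Z') (zr Z' Z) = idm Z'"
    using comp_zr_left[OF g Z'o] z' unfolding is_zero_obj_def by simp
  ultimately show ?thesis unfolding isomorphic_def is_iso_def
    using f g hom_dom[OF f] hom_cod[OF f] hom_mor[OF f] by metis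
qed

lemma biprod_exists: "X \<in> Ob \<Longrightarrow> Y \<in> Ob \<Longrightarrow> \<exists>P i1 i2 p1 p2. is_biprod C P X Y i1 i2 p1 p2"
  using triangulated unfolding triangulated_def additive_ax_def by (elim conjE) blast

lemma is_iso_id: "X \<in> Ob \<Longrightarrow> is_iso C (idm X)"
  unfolding is_iso_def using id_hom hom_dom hom_cod hom_mor by (metis comp_id_left)

lemma is_iso_ng_id: assumes X: "X \<in> Ob" shows "is_iso C (ng (idm X))"
proof -
  have i: "ng (idm X) \<in> H X X" using X by blast
  have "cp (ng (idm X)) (ng (idm X)) = idm X"
    using comp_ng_left[OF i id_hom[OF X]] i ng_ng[OF id_hom[OF X]] by simp
  thus ?thesis unfolding is_iso_def using i hom_dom hom_cod hom_mor by metis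
qed

section \<open>The shift functor\<close>

lemma sh_obj[intro]: "X \<in> Ob \<Longrightarrow> sh X \<in> Ob"
  using shift_axioms unfolding shift_ax_def by auto

lemma shm_hom[intro]: "f \<in> H X Y \<Longrightarrow> shm f \<in> H (sh X) (sh Y)"
  using shift_axioms unfolding shift_ax_def hom_def by auto

lemma shm_comp: "f \<in> H X Y \<Longrightarrow> g \<in> H Y Z \<Longrightarrow> shm (cp g f) = cp (shm g) (shm f)"
  using shift_axioms unfolding shift_ax_def hom_def by auto

lemma shm_id[simp]: "X \<in> Ob \<Longrightarrow> shm (idm X) = idm (sh X)"
  using shift_axioms unfolding shift_ax_def by auto

lemma shm_pl: "f \<in> H X Y \<Longrightarrow> g \<in> H X Y \<Longrightarrow> shm (pl f g) = pl (shm f) (shm g)"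
  using shift_axioms hom_obj unfolding shift_ax_def by metis

lemma shm_full: "X \<in> Ob \<Longrightarrow> Y \<in> Ob \<Longrightarrow> g \<in> H (sh X) (sh Y) \<Longrightarrow> \<exists>f\<in>H X Y. shm f = g"
  using shift_axioms unfolding shift_ax_def by auto

lemma shm_inj: "f \<in> H X Y \<Longrightarrow> g \<in> H X Y \<Longrightarrow> shm f = shm g \<Longrightarrow> f = g"
  using shift_axioms hom_obj unfolding shift_ax_def inj_on_def by metis

lemma sh_ess_surj: "Y \<in> Ob \<Longrightarrow> \<exists>X\<in>Ob. isomorphic C (sh X) Y"
  using shift_axioms unfolding shift_ax_def by blast

lemma shm_zr[simp]: assumes X: "X \<in> Ob" and Y: "Y \<in> Ob" shows "shm (zr X Y) = zr (sh X) (sh Y)"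
proof -
  have z: "zr X Y \<in> H X Y" using X Y by blast
  have "pl (shm (zr X Y)) (shm (zr X Y)) = shm (zr X Y)"
    using shm_pl[OF z z] pl_zr[OF z] by simp
  thus ?thesis using pl_idem_eq_zr shm_hom[OF z] by blast
qed

lemma shm_eq_zr_iff: "f \<in> H X Y \<Longrightarrow> shm f = zr (sh X) (sh Y) \<longleftrightarrow> f = zr X Y"
  by (metis hom_obj shm_inj shm_zr zr_hom)

lemma is_zero_obj_sh: "is_zero_obj C Z \<Longrightarrow> is_zero_obj C (sh Z)"
  unfolding is_zero_obj_def by (metis sh_obj shm_id shm_zr)

section \<open>Distinguished triangles\<close>

lemma triangle_axioms:
  "\<forall>t\<in>ttri C. tri_shape C t"
  "\<forall>t t' a b c. t \<in> ttri C \<and> tri_shape C t' \<and> tri_morph C t t' a b c \<and>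
     is_iso C a \<and> is_iso C b \<and> is_iso C c \<longrightarrow> t' \<in> ttri C"
  "\<forall>X\<in>Ob. \<forall>Z. is_zero_obj C Z \<longrightarrow> (idm X, zr X Z, zr Z (sh X)) \<in> ttri C"
  "\<forall>u\<in>tmor C. \<exists>v w. (u, v, w) \<in> ttri C"
  "\<forall>u v w. tri_shape C (u, v, w) \<longrightarrow> ((u, v, w) \<in> ttri C \<longleftrightarrow> (v, w, ng (shm u)) \<in> ttri C)"
  "\<forall>u v w u' v' w' a b. (u, v, w) \<in> ttri C \<and> (u', v', w') \<in> ttri C \<and>
     a \<in> H (tdm C u) (tdm C u') \<and> b \<in> H (tcd C u) (tcd C u') \<and> cp b u = cp u' a \<longrightarrow>
     (\<exists>c. tri_morph C (u, v, w) (u', v', w') a b c)"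
  using triangulated unfolding triangulated_def by - (elim conjE, assumption)+

lemma tri_shape_of_tri: "t \<in> ttri C \<Longrightarrow> tri_shape C t"
  using triangle_axioms(1) by blast

lemma tri_closed_iso:
  "t \<in> ttri C \<Longrightarrow> tri_shape C t' \<Longrightarrow> tri_morph C t t' a b c \<Longrightarrow>
    is_iso C a \<Longrightarrow> is_iso C b \<Longrightarrow> is_iso C c \<Longrightarrow> t' \<in> ttri C"
  using triangle_axioms(2) by blast

lemma tri_id_zero: "X \<in> Ob \<Longrightarrow> is_zero_obj C Z \<Longrightarrow> (idm X, zr X Z, zr Z (sh X)) \<in> ttri C"
  using triangle_axioms(3) by blast

lemma tri_exists: "u \<in> H X Y \<Longrightarrow> \<exists>v w. (u, v, w) \<in> ttri C"
  using triangle_axioms(4) hom_mor by blast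

lemma tri_shapeI: "u \<in> H X Y \<Longrightarrow> v \<in> H Y Z \<Longrightarrow> w \<in> H Z (sh X) \<Longrightarrow> tri_shape C (u, v, w)"
  by (simp add: tri_shape_def hom_def)

lemma tri_homs: assumes "(u, v, w) \<in> ttri C"
  shows "u \<in> H (tdm C u) (tcd C u)" "v \<in> H (tcd C u) (tcd C v)" "w \<in> H (tcd C v) (sh (tdm C u))"
  using tri_shape_of_tri[OF assms] unfolding tri_shape_def hom_def by auto

lemma tri_third_hom: "(u, v, w) \<in> ttri C \<Longrightarrow> u \<in> H X Y \<Longrightarrow> v \<in> H Y Z \<Longrightarrow> w \<in> H Z (sh X)"
  using tri_homs hom_cod hom_dom by metis

lemma tri_rotate: "(u, v, w) \<in> ttri C \<Longrightarrow> (v, w, ng (shm u)) \<in> ttri C"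
  using triangle_axioms(5) tri_shape_of_tri by blast

lemma tri_rotate_back:
  assumes "(v, w, ng (shm u)) \<in> ttri C" and "u \<in> H X Y" "v \<in> H Y Z" "w \<in> H Z (sh X)"
  shows "(u, v, w) \<in> ttri C"
  using triangle_axioms(5) tri_shapeI[OF assms(2-4)] assms(1) by blast

lemma tri_morph_exists:
  assumes t: "(u, v, w) \<in> ttri C" and t': "(u', v', w') \<in> ttri C"
    and u: "u \<in> H X Y" and u': "u' \<in> H X' Y'" and a: "a \<in> H X X'" and b: "b \<in> H Y Y'"
    and sq: "cp b u = cp u' a"
  shows "\<exists>c. tri_morph C (u, v, w) (u', v', w') a b c"
  using triangle_axioms(6) t t' a b sq hom_dom[OF u] hom_cod[OF u] hom_dom[OF u'] hom_cod[OF u']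
  by metis

lemma tri_comp_zero:
  assumes t: "(u, v, w) \<in> ttri C" and u: "u \<in> H X Y" and v: "v \<in> H Y Z"
  shows "cp v u = zr X Z"
proof -
  obtain Z0 where z: "is_zero_obj C Z0" using zero_obj_exists by blast
  have X: "X \<in> Ob" using u hom_obj by blast
  have zh: "zr X Z0 \<in> H X Z0" using X z zero_obj_obj by blast
  obtain c where c: "tri_morph C (idm X, zr X Z0, zr Z0 (sh X)) (u, v, w) (idm X) u c"
    using tri_morph_exists[OF tri_id_zero[OF X z] t id_hom[OF X] u id_hom[OF X] u] u by auto
  have ch: "c \<in> H Z0 Z" and eq: "cp c (zr X Z0) = cp v u"
    using c v u unfolding tri_morph_def by (auto simp: hom_cod[OF zh] hom_cod[OF v])
  have "c = zr Z0 Z" using zero_obj_hom_from z ch by blast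
  thus ?thesis using eq X hom_obj[OF ch] by (metis comp_zr_left zr_hom)
qed

lemma tri_weak_cokernel:
  assumes t: "(u, v, w) \<in> ttri C" and u: "u \<in> H X Y" and v: "v \<in> H Y Z"
    and h: "h \<in> H Y M" and hu: "cp h u = zr X M"
  shows "\<exists>h'\<in>H Z M. h = cp h' v"
proof -
  obtain Z0 where z: "is_zero_obj C Z0" using zero_obj_exists by blast
  have M: "M \<in> Ob" and X: "X \<in> Ob" using h u hom_obj by auto
  have Z0: "Z0 \<in> Ob" using z zero_obj_obj by blast
  have t': "(zr Z0 M, idm M, zr M (sh Z0)) \<in> ttri C"
    by (rule tri_rotate_back) (use tri_id_zero[OF M is_zero_obj_sh[OF z]] M Z0 sh_obj[OF M] sh_obj[OF Z0] in auto)
  have sq: "cp h u = cp (zr Z0 M) (zr X Z0)" using hu comp_zr_left[OF zr_hom[OF X Z0] M] by simp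
  obtain c where c: "tri_morph C (u, v, w) (zr Z0 M, idm M, zr M (sh Z0)) (zr X Z0) h c"
    using tri_morph_exists[OF t t' u zr_hom[OF Z0 M] zr_hom[OF X Z0] h sq] by blast
  have "c \<in> H Z M" and "cp c v = cp (idm M) h"
    using c v u M Z0 unfolding tri_morph_def by (auto simp: hom_cod[OF id_hom[OF M]] hom_cod[OF v])
  thus ?thesis using h by auto
qed

lemma tri_weak_kernel:
  assumes t: "(u, v, w) \<in> ttri C" and u: "u \<in> H X Y" and v: "v \<in> H Y Z"
    and h: "h \<in> H N Y" and vh: "cp v h = zr N Z"
  shows "\<exists>h'\<in>H N X. h = cp u h'"
proof -
  obtain Z0 where z: "is_zero_obj C Z0" using zero_obj_exists by blast
  have N: "N \<in> Ob" and X: "X \<in> Ob" and Z: "Z \<in> Ob" using h u v hom_obj by auto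
  have Z0: "Z0 \<in> Ob" using z zero_obj_obj by blast
  have w: "w \<in> H Z (sh X)" using tri_third_hom t u v by blast
  have shu: "shm u \<in> H (sh X) (sh Y)" and shh: "shm h \<in> H (sh N) (sh Y)" using u h by auto
  have sq: "cp (zr Z0 Z) (zr N Z0) = cp v h" using vh comp_zr_left[OF zr_hom[OF N Z0] Z] by simp
  obtain c where c: "tri_morph C (zr N Z0, zr Z0 (sh N), ng (shm (idm N))) (v, w, ng (shm u))
      h (zr Z0 Z) c"
    using tri_morph_exists[OF tri_rotate[OF tri_id_zero[OF N z]] tri_rotate[OF t]
        zr_hom[OF N Z0] v h zr_hom[OF Z0 Z] sq] by blast
  have ch: "c \<in> H (sh N) (sh X)" and eq: "cp (shm h) (ng (shm (idm N))) = cp (ng (shm u)) c"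
    using c v u w N Z0 unfolding tri_morph_def
    by (auto simp: hom_cod[OF zr_hom[OF Z0 sh_obj[OF N]]] hom_cod[OF w])
  have "ng (shm h) = ng (cp (shm u) c)"
    using eq N shh comp_ng_right[OF id_hom[OF sh_obj[OF N]] shh] comp_ng_left[OF ch shu] by simp
  hence "shm h = cp (shm u) c" using shh ch shu by (metis comp_hom ng_ng)
  moreover obtain h' where h': "h' \<in> H N X" "shm h' = c" using shm_full[OF N X ch] by blast
  ultimately have "shm h = shm (cp u h')" using u shm_comp by metis
  hence "h = cp u h'" using shm_inj h h' u by blast
  thus ?thesis using h' by blast
qed

lemma tri_shift:
  assumes t: "(u, v, w) \<in> ttri C" and u: "u \<in> H X Y" and v: "v \<in> H Y Z"
  shows "(shm u, shm v, ng (shm w)) \<in> ttri C"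
proof -
  have w: "w \<in> H Z (sh X)" using tri_third_hom t u v by blast
  have X: "sh X \<in> Ob" and Y: "sh Y \<in> Ob" and Z: "sh Z \<in> Ob" using u v hom_obj by auto
  have su: "shm u \<in> H (sh X) (sh Y)" and sv: "shm v \<in> H (sh Y) (sh Z)"
    and sw: "shm w \<in> H (sh Z) (sh (sh X))" using u v w by auto
  have "cp (ng (idm (sh Y))) (ng (shm u)) = cp (shm u) (idm (sh X))"
    using comp_ng_left[OF ng_hom[OF su] id_hom[OF Y]] ng_ng[OF su] su ng_hom[OF su] by simp
  moreover have "cp (idm (sh Z)) (ng (shm v)) = cp (shm v) (ng (idm (sh Y)))"
    using comp_ng_right[OF id_hom[OF Y] sv] sv ng_hom[OF sv] by simp
  moreover have "cp (shm (idm (sh X))) (ng (shm w)) = cp (ng (shm w)) (idm (sh Z))"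
    using X ng_hom[OF sw] by simp
  ultimately have "tri_morph C (ng (shm u), ng (shm v), ng (shm w)) (shm u, shm v, ng (shm w))
      (idm (sh X)) (ng (idm (sh Y))) (idm (sh Z))"
    unfolding tri_morph_def prod.case
    using hom_dom[OF ng_hom[OF su]] hom_cod[OF ng_hom[OF su]] hom_cod[OF ng_hom[OF sv]]
      hom_cod[OF sv] hom_cod[OF su] hom_dom[OF su] X Y Z by auto
  moreover have "(ng (shm u), ng (shm v), ng (shm w)) \<in> ttri C"
    using tri_rotate[OF tri_rotate[OF tri_rotate[OF t]]] .
  ultimately show ?thesis
    using tri_closed_iso tri_shapeI[OF su sv ng_hom[OF sw]] is_iso_id is_iso_ng_id X Y Z by blast
qed

lemma tri_section_of_zero:
  assumes t: "(a, u, v) \<in> ttri C" and u: "u \<in> H P E" and v: "v \<in> H E Z" and v0: "v = zr E Z"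
  shows "\<exists>s\<in>H E P. cp u s = idm E"
proof -
  have E: "E \<in> Ob" using u hom_obj by blast
  show ?thesis using tri_weak_kernel[OF tri_rotate[OF t] u v id_hom[OF E]] v v0 E by auto
qed

lemma tri_mono_of_zero:
  assumes t: "(a, u, v) \<in> ttri C" and a: "a \<in> H Q P" and u: "u \<in> H P E"
    and v0: "v = zr E (sh Q)" and x: "x \<in> H N Q" and ax: "cp a x = zr N P"
  shows "x = zr N Q"
proof -
  have N: "N \<in> Ob" and P: "P \<in> Ob" and Q: "Q \<in> Ob" using x a hom_obj by auto
  have v: "v \<in> H E (sh Q)" using v0 u Q hom_obj by blast
  have sa: "ng (shm a) \<in> H (sh Q) (sh P)" using a by blast
  have "cp (ng (shm a)) (shm x) = ng (shm (cp a x))"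
    using comp_ng_left[OF shm_hom[OF x] shm_hom[OF a]] shm_comp[OF x a] by simp
  hence "cp (ng (shm a)) (shm x) = zr (sh N) (sh P)" using ax N P sh_obj by simp
  then obtain h where h: "h \<in> H (sh N) E" and "shm x = cp v h"
    using tri_weak_kernel[OF tri_rotate[OF tri_rotate[OF t]] v sa shm_hom[OF x]] by blast
  hence "shm x = zr (sh N) (sh Q)" using v0 h sh_obj[OF Q] by simp
  thus ?thesis using shm_eq_zr_iff x by blast
qed

text \<open>The retraction r onto Q is obtained by factoring the idempotent 1 - s u through a,
  which is possible because u (1 - s u) = 0.\<close>

lemma tri_split_of_zero:
  assumes t: "(a, u, v) \<in> ttri C" and a: "a \<in> H Q P" and u: "u \<in> H P E"
    and v0: "v = zr E (sh Q)"
  shows "\<exists>s r. is_biprod C P E Q s a u r"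
proof -
  have E: "E \<in> Ob" and P: "P \<in> Ob" and Q: "Q \<in> Ob" using a u hom_obj by auto
  have v: "v \<in> H E (sh Q)" using v0 E Q by blast
  obtain s where s: "s \<in> H E P" and us: "cp u s = idm E" using tri_section_of_zero[OF t u v v0] by blast
  have ua: "cp u a = zr Q E" using tri_comp_zero[OF t a u] .
  define e where "e = pl (idm P) (ng (cp s u))"
  have su: "cp s u \<in> H P P" using s u by blast
  have "cp u e = zr P E"
    unfolding e_def using comp_pl_right[OF id_hom[OF P] ng_hom[OF su] u] comp_ng_right[OF su u]
      comp_assoc[OF u s u] us u pl_ng by simp
  then obtain r where r: "r \<in> H P Q" and er: "e = cp a r"
    using tri_weak_kernel[OF t a u] e_def su P by blast
  have mono: "\<And>x N. x \<in> H N Q \<Longrightarrow> cp a x = zr N P \<Longrightarrow> x = zr N Q"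
    using tri_mono_of_zero[OF t a u v0] by blast
  have ra: "cp r a = idm Q"
  proof -
    have ra_h: "cp r a \<in> H Q Q" using r a by blast
    have "cp a (cp r a) = cp e a" using comp_assoc[OF a r a] er by simp
    also have "\<dots> = pl a (ng (cp s (cp u a)))"
      unfolding e_def using comp_pl_left[OF a id_hom[OF P] ng_hom[OF su]] comp_ng_left[OF a su]
        comp_assoc[OF a u s] a by simp
    also have "\<dots> = a" using ua s Q diff_zr[OF a] by simp
    finally have "cp a (pl (cp r a) (ng (idm Q))) = zr Q P"
      using comp_pl_right[OF ra_h ng_hom[OF id_hom[OF Q]] a] comp_ng_right[OF id_hom[OF Q] a] a pl_ng
      by simp
    thus ?thesis using mono eq_of_diff_eq_zr ra_h id_hom[OF Q] by blast
  qed
  have rs: "cp r s = zr E Q"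
  proof -
    have "cp a (cp r s) = cp e s" using comp_assoc[OF s r a] er by simp
    also have "\<dots> = pl s (ng (cp s (cp u s)))"
      unfolding e_def using comp_pl_left[OF s id_hom[OF P] ng_hom[OF su]] comp_ng_left[OF s su]
        comp_assoc[OF s u s] s by simp
    also have "\<dots> = zr E P" using us s pl_ng by simp
    finally show ?thesis using mono r s by blast
  qed
  have "pl (cp s u) (cp a r) = idm P"
    using er e_def pl_diff_cancel[OF su id_hom[OF P]] by simp
  hence "is_biprod C P E Q s a u r"
    unfolding is_biprod_def using P E Q s a u r us ra ua rs by simp
  thus ?thesis by blast
qed

lemma tri_rotate_back_exists:
  assumes t: "(v, w, x) \<in> ttri C" and v: "v \<in> H E T" and w: "w \<in> H T N"
  shows "\<exists>X u w'. X \<in> Ob \<and> u \<in> H X E \<and> w' \<in> H T (sh X) \<and> (u, v, w') \<in> ttri C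
    \<and> isomorphic C N (sh X)"
proof -
  have x: "x \<in> H N (sh E)" using tri_third_hom[OF t v w] .
  have E: "E \<in> Ob" and T: "T \<in> Ob" and N: "N \<in> Ob" using v w hom_obj by auto
  obtain X where X: "X \<in> Ob" and "isomorphic C (sh X) N" using sh_ess_surj[OF N] by blast
  then obtain \<phi> where \<phi>: "\<phi> \<in> H (sh X) N" and "is_iso C \<phi>" unfolding isomorphic_def by blast
  then obtain \<psi> where \<psi>: "\<psi> \<in> H N (sh X)" and e1: "cp \<psi> \<phi> = idm (sh X)" and e2: "cp \<phi> \<psi> = idm N"
    unfolding is_iso_def by (auto simp: hom_dom[OF \<phi>] hom_cod[OF \<phi>])
  have \<psi>_iso: "is_iso C \<psi>"
    unfolding is_iso_def using \<psi> \<phi> e1 e2 hom_dom[OF \<psi>] hom_cod[OF \<psi>] hom_mor[OF \<psi>] by metis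
  have \<psi>w: "cp \<psi> w \<in> H T (sh X)" and x\<phi>: "cp x \<phi> \<in> H (sh X) (sh E)" using \<phi> \<psi> w x by auto
  have "tri_morph C (v, w, x) (v, cp \<psi> w, cp x \<phi>) (idm E) (idm T) \<psi>"
    unfolding tri_morph_def prod.case
    using hom_dom[OF v] hom_cod[OF v] hom_cod[OF w] hom_cod[OF \<psi>w] id_hom[OF E] id_hom[OF T] shm_id[OF E] \<psi> v w \<psi>w x
      comp_assoc[OF \<psi> \<phi> x] e2 by simp
  hence t': "(v, cp \<psi> w, cp x \<phi>) \<in> ttri C"
    using tri_closed_iso[OF t tri_shapeI[OF v \<psi>w x\<phi>]] is_iso_id[OF E] is_iso_id[OF T] \<psi>_iso by blast
  obtain u where u: "u \<in> H X E" and su: "shm u = ng (cp x \<phi>)"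
    using shm_full[OF X E ng_hom[OF x\<phi>]] by blast
  have "(u, v, cp \<psi> w) \<in> ttri C"
    by (rule tri_rotate_back[OF _ u v \<psi>w]) (use t' su ng_ng[OF x\<phi>] in simp)
  moreover have "isomorphic C N (sh X)" unfolding isomorphic_def using \<psi> \<psi>_iso by blast
  ultimately show ?thesis using X u \<psi>w by blast
qed

text \<open>Two cones of the same morphism v are linked by maps in both directions (TR3); these need
  not be inverse to each other, but they suffice to transport the vanishing of all maps into Z.\<close>

lemma tri_cone_hom_zero_transfer:
  assumes t: "(v, w, x) \<in> ttri C" and t': "(v, w', x') \<in> ttri C"
    and v: "v \<in> H E T" and w: "w \<in> H T N" and w': "w' \<in> H T N'"
    and vanish: "\<And>h. h \<in> H N' Z \<Longrightarrow> h = zr N' Z" and y: "y \<in> H N Z"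
  shows "y = zr N Z"
proof -
  have E: "E \<in> Ob" and T: "T \<in> Ob" and Z: "Z \<in> Ob" using v y hom_obj by auto
  have x: "x \<in> H N (sh E)" and x': "x' \<in> H N' (sh E)" using tri_third_hom t t' v w w' by auto
  have sq: "cp (idm T) v = cp v (idm E)" using v by simp
  obtain c where "tri_morph C (v, w', x') (v, w, x) (idm E) (idm T) c"
    using tri_morph_exists[OF t' t v v id_hom[OF E] id_hom[OF T] sq] by blast
  hence c: "c \<in> H N' N" and cw: "cp c w' = w"
    unfolding tri_morph_def using hom_cod[OF v] hom_cod[OF w] hom_cod[OF w'] w by auto
  obtain c' where "tri_morph C (v, w, x) (v, w', x') (idm E) (idm T) c'"
    using tri_morph_exists[OF t t' v v id_hom[OF E] id_hom[OF T] sq] by blast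
  hence c': "c' \<in> H N N'" and xc: "x = cp x' c'"
    unfolding tri_morph_def using hom_cod[OF v] hom_cod[OF w] hom_cod[OF w'] hom_dom[OF x] E x by auto
  have "cp y w = cp (cp y c) w'" using cw comp_assoc[OF w' c y] by simp
  hence "cp y w = zr T Z" using vanish[OF comp_hom[OF c y]] w' Z by simp
  then obtain y' where y': "y' \<in> H (sh E) Z" and yy: "y = cp y' x"
    using tri_weak_cokernel[OF tri_rotate[OF t] w x y] by blast
  have "y = cp (cp y' x') c'" using yy xc comp_assoc[OF c' x' y'] by simp
  thus ?thesis using vanish[OF comp_hom[OF x' y']] c' Z by simp
qed

section \<open>The ideal quotient by a subcategory\<close>

lemma subcat_obj: "subcat C D \<Longrightarrow> X \<in> D \<Longrightarrow> X \<in> Ob"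
  unfolding subcat_def by blast

lemma subcat_Int: assumes T: "subcat C T" and U: "subcat C U" shows "subcat C (T \<inter> U)"
proof -
  obtain Zt where Zt: "Zt \<in> T" "is_zero_obj C Zt" using T unfolding subcat_def by blast
  obtain Zu where Zu: "Zu \<in> U" "is_zero_obj C Zu" using U unfolding subcat_def by blast
  have "Zu \<in> T" using T Zt zero_objs_isomorphic[OF Zt(2) Zu(2)] unfolding subcat_def by blast
  hence "\<exists>Z\<in>T \<inter> U. is_zero_obj C Z" using Zu by blast
  thus ?thesis using T U unfolding subcat_def by blast
qed

lemma factors_throughI: "Z \<in> D \<Longrightarrow> a \<in> H X Z \<Longrightarrow> b \<in> H Z Y \<Longrightarrow> factors_through C D (cp b a)"
  unfolding factors_through_def using comp_hom hom_dom hom_cod by metis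

lemma factors_throughD:
  "h \<in> H X Y \<Longrightarrow> factors_through C D h \<Longrightarrow> \<exists>Z\<in>D. \<exists>a\<in>H X Z. \<exists>b\<in>H Z Y. h = cp b a"
  unfolding factors_through_def using hom_dom hom_cod by metis

lemma factors_through_zr: assumes D: "subcat C D" and X: "X \<in> Ob" and Y: "Y \<in> Ob"
  shows "factors_through C D (zr X Y)"
proof -
  obtain Z where Z: "Z \<in> D" "is_zero_obj C Z" using D unfolding subcat_def by blast
  hence Zo: "Z \<in> Ob" using zero_obj_obj by blast
  have "zr X Y = cp (zr Z Y) (zr X Z)" using comp_zr_left[OF zr_hom[OF X Zo] Y] by simp
  thus ?thesis using factors_throughI[OF Z(1) zr_hom[OF X Zo] zr_hom[OF Zo Y]] by simp
qed

lemma factors_through_comp_left: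
  assumes h: "h \<in> H X Y" and f: "factors_through C D h" and g: "g \<in> H Y M"
  shows "factors_through C D (cp g h)"
proof -
  obtain Z a b where "Z \<in> D" "a \<in> H X Z" "b \<in> H Z Y" "h = cp b a" using factors_throughD[OF h f] by blast
  thus ?thesis using factors_throughI[of Z D a X "cp g b" M] comp_assoc g by auto
qed

lemma factors_through_comp_right:
  assumes h: "h \<in> H X Y" and f: "factors_through C D h" and k: "k \<in> H N X"
  shows "factors_through C D (cp h k)"
proof -
  obtain Z a b where "Z \<in> D" "a \<in> H X Z" "b \<in> H Z Y" "h = cp b a" using factors_throughD[OF h f] by blast
  thus ?thesis using factors_throughI[of Z D "cp a k" N b Y] comp_assoc k by auto
qed

lemma factors_through_ng: assumes h: "h \<in> H X Y" and f: "factors_through C D h"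
  shows "factors_through C D (ng h)"
proof -
  obtain Z a b where "Z \<in> D" "a \<in> H X Z" "b \<in> H Z Y" "h = cp b a" using factors_throughD[OF h f] by blast
  thus ?thesis using factors_throughI[of Z D a X "ng b" Y] comp_ng_left by auto
qed

text \<open>Two factorisations through Z1 and Z2 are combined into one through their biproduct,
  which lies in D since D is closed under direct sums.\<close>

lemma factors_through_pl:
  assumes D: "subcat C D" and h1: "h1 \<in> H X Y" and f1: "factors_through C D h1"
    and h2: "h2 \<in> H X Y" and f2: "factors_through C D h2"
  shows "factors_through C D (pl h1 h2)"
proof -
  obtain Z1 a1 b1 where Z1: "Z1 \<in> D" and a1: "a1 \<in> H X Z1" and b1: "b1 \<in> H Z1 Y" and e1: "h1 = cp b1 a1"
    using factors_throughD[OF h1 f1] by blast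
  obtain Z2 a2 b2 where Z2: "Z2 \<in> D" and a2: "a2 \<in> H X Z2" and b2: "b2 \<in> H Z2 Y" and e2: "h2 = cp b2 a2"
    using factors_throughD[OF h2 f2] by blast
  have Z1o: "Z1 \<in> Ob" and Z2o: "Z2 \<in> Ob" using Z1 Z2 D subcat_obj by auto
  obtain P i1 i2 p1 p2 where bp: "is_biprod C P Z1 Z2 i1 i2 p1 p2" using biprod_exists Z1o Z2o by blast
  have PD: "P \<in> D" using D bp Z1 Z2 unfolding subcat_def by blast
  have i1: "i1 \<in> H Z1 P" and i2: "i2 \<in> H Z2 P" and p1: "p1 \<in> H P Z1" and p2: "p2 \<in> H P Z2"
    and e11: "cp p1 i1 = idm Z1" and e22: "cp p2 i2 = idm Z2" and e12: "cp p1 i2 = zr Z2 Z1"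
    and e21: "cp p2 i1 = zr Z1 Z2" using bp unfolding is_biprod_def by auto
  define a where "a = pl (cp i1 a1) (cp i2 a2)"
  define b where "b = pl (cp b1 p1) (cp b2 p2)"
  have ia1: "cp i1 a1 \<in> H X P" and ia2: "cp i2 a2 \<in> H X P" using i1 i2 a1 a2 by auto
  have bp1: "cp b1 p1 \<in> H P Y" and bp2: "cp b2 p2 \<in> H P Y" using b1 b2 p1 p2 by auto
  have a: "a \<in> H X P" and b: "b \<in> H P Y" using a_def b_def ia1 ia2 bp1 bp2 by auto
  have "cp b i1 = pl (cp b1 (cp p1 i1)) (cp b2 (cp p2 i1))"
    unfolding b_def using comp_pl_left[OF i1 bp1 bp2] comp_assoc[OF i1 p1 b1] comp_assoc[OF i1 p2 b2]
    by simp
  hence bi1: "cp b i1 = b1" using e11 e21 b1 b2 Z1o pl_zr by simp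
  have "cp b i2 = pl (cp b1 (cp p1 i2)) (cp b2 (cp p2 i2))"
    unfolding b_def using comp_pl_left[OF i2 bp1 bp2] comp_assoc[OF i2 p1 b1] comp_assoc[OF i2 p2 b2]
    by simp
  hence bi2: "cp b i2 = b2" using e12 e22 b1 b2 Z2o zr_pl by simp
  have "cp b a = pl (cp b (cp i1 a1)) (cp b (cp i2 a2))" unfolding a_def using comp_pl_right[OF ia1 ia2 b] .
  also have "\<dots> = pl h1 h2" using comp_assoc[OF a1 i1 b] comp_assoc[OF a2 i2 b] bi1 bi2 e1 e2 by simp
  finally show ?thesis using factors_throughI[OF PD a b] by simp
qed

lemma mem_qcls_iff:
  "f \<in> H X Y \<Longrightarrow> g \<in> qcls C D f \<longleftrightarrow> g \<in> H X Y \<and> factors_through C D (pl f (ng g))"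
  unfolding qcls_def stab_rel_def using hom_dom hom_cod by auto

lemma qcls_self: assumes D: "subcat C D" and f: "f \<in> H X Y" shows "f \<in> qcls C D f"
  using mem_qcls_iff[OF f] f pl_ng[OF f] factors_through_zr[OF D] hom_obj[OF f] by simp

lemma qcls_eq_iff: assumes D: "subcat C D" and f: "f \<in> H X Y" and g: "g \<in> H X Y"
  shows "qcls C D f = qcls C D g \<longleftrightarrow> factors_through C D (pl f (ng g))"
proof
  assume "qcls C D f = qcls C D g"
  hence "g \<in> qcls C D f" using qcls_self[OF D g] by simp
  thus "factors_through C D (pl f (ng g))" using mem_qcls_iff[OF f] by simp
next
  assume fg: "factors_through C D (pl f (ng g))"
  have gf: "factors_through C D (pl g (ng f))"
    using factors_through_ng[OF pl_hom[OF f ng_hom[OF g]] fg] ng_diff[OF f g] by simp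
  have "factors_through C D (pl f (ng x)) \<longleftrightarrow> factors_through C D (pl g (ng x))"
    if x: "x \<in> H X Y" for x
  proof
    assume fx: "factors_through C D (pl f (ng x))"
    have "factors_through C D (pl (pl g (ng f)) (pl f (ng x)))"
      using factors_through_pl[OF D _ gf _ fx] f g x by blast
    thus "factors_through C D (pl g (ng x))" using diff_trans[OF g f x] by simp
  next
    assume gx: "factors_through C D (pl g (ng x))"
    have "factors_through C D (pl (pl f (ng g)) (pl g (ng x)))"
      using factors_through_pl[OF D _ fg _ gx] f g x by blast
    thus "factors_through C D (pl f (ng x))" using diff_trans[OF f g x] by simp
  qed
  thus "qcls C D f = qcls C D g"
    by (intro set_eqI) (simp add: mem_qcls_iff[OF f] mem_qcls_iff[OF g], blast)
qed

lemma qcls_eq_zr_iff: assumes D: "subcat C D" and f: "f \<in> H X Y"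
  shows "qcls C D f = qcls C D (zr X Y) \<longleftrightarrow> factors_through C D f"
  using qcls_eq_iff[OF D f zr_hom] hom_obj[OF f] diff_zr[OF f] by simp

lemma qcmp_qcls: assumes D: "subcat C D" and a: "a \<in> H X Y" and b: "b \<in> H Y Z"
  shows "qcmp C D (qcls C D b) (qcls C D a) = qcls C D (cp b a)"
proof -
  have ba: "cp b a \<in> H X Z" using a b by blast
  have "qcls C D (cp b' a') = qcls C D (cp b a)"
    if b': "b' \<in> qcls C D b" and a': "a' \<in> qcls C D a" for a' b'
  proof -
    have b'h: "b' \<in> H Y Z" and fb: "factors_through C D (pl b (ng b'))" using b' mem_qcls_iff[OF b] by auto
    have a'h: "a' \<in> H X Y" and fa: "factors_through C D (pl a (ng a'))" using a' mem_qcls_iff[OF a] by auto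
    have bb: "pl b (ng b') \<in> H Y Z" and aa: "pl a (ng a') \<in> H X Y" using b b'h a a'h by auto
    have "cp (pl b (ng b')) a = pl (cp b a) (ng (cp b' a))"
      using comp_pl_left[OF a b ng_hom[OF b'h]] comp_ng_left[OF a b'h] by simp
    moreover have "cp b' (pl a (ng a')) = pl (cp b' a) (ng (cp b' a'))"
      using comp_pl_right[OF a ng_hom[OF a'h] b'h] comp_ng_right[OF a'h b'h] by simp
    moreover have "factors_through C D (pl (cp (pl b (ng b')) a) (cp b' (pl a (ng a'))))"
      using factors_through_pl[OF D _ factors_through_comp_right[OF bb fb a] _
          factors_through_comp_left[OF aa fa b'h]] bb aa a b'h by blast
    ultimately have "factors_through C D (pl (cp b a) (ng (cp b' a')))"
      using diff_trans[OF ba comp_hom[OF a b'h] comp_hom[OF a'h b'h]] by simp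
    thus ?thesis using qcls_eq_iff[OF D ba comp_hom[OF a'h b'h]] by simp
  qed
  hence "{qcls C D (cp b' a') | b' a'. b' \<in> qcls C D b \<and> a' \<in> qcls C D a} = {qcls C D (cp b a)}"
    using qcls_self[OF D a] qcls_self[OF D b] by blast
  thus ?thesis unfolding qcmp_def by simp
qed

lemma qhom_eq_image: "qhom C D X Y = qcls C D ` H X Y"
  unfolding qhom_def quotient_def qcls_def using hom_dom hom_cod by auto

lemma inj_on_qcmp_qcls:
  assumes D: "subcat C D" and m: "m \<in> H B M"
    and faithful: "\<And>g. g \<in> H M Y \<Longrightarrow> factors_through C D (cp g m) \<Longrightarrow> factors_through C D g"
  shows "inj_on (\<lambda>\<gamma>. qcmp C D \<gamma> (qcls C D m)) (qhom C D M Y)"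
proof (rule inj_onI)
  fix x y assume "x \<in> qhom C D M Y" "y \<in> qhom C D M Y"
    and e: "qcmp C D x (qcls C D m) = qcmp C D y (qcls C D m)"
  then obtain g1 g2 where g1: "g1 \<in> H M Y" "x = qcls C D g1" and g2: "g2 \<in> H M Y" "y = qcls C D g2"
    unfolding qhom_eq_image by blast
  have "pl (cp g1 m) (ng (cp g2 m)) = cp (pl g1 (ng g2)) m"
    using comp_pl_left[OF m g1(1) ng_hom[OF g2(1)]] comp_ng_left[OF m g2(1)] by simp
  moreover have "factors_through C D (pl (cp g1 m) (ng (cp g2 m)))"
    using e g1 g2 qcmp_qcls[OF D m] qcls_eq_iff[OF D comp_hom[OF m g1(1)] comp_hom[OF m g2(1)]] by simp
  ultimately have "factors_through C D (pl g1 (ng g2))"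
    using faithful[OF pl_hom[OF g1(1) ng_hom[OF g2(1)]]] by simp
  thus "x = y" using qcls_eq_iff[OF D g1(1) g2(1)] g1(2) g2(2) by simp
qed

lemma bij_betw_qcmp_weak_cokernel:
  assumes D: "subcat C D" and f: "f \<in> H A B" and m: "m \<in> H B M"
    and mf: "factors_through C D (cp m f)"
    and faithful: "\<And>g. g \<in> H M Y \<Longrightarrow> factors_through C D (cp g m) \<Longrightarrow> factors_through C D g"
    and lift: "\<And>b. b \<in> H B Y \<Longrightarrow> factors_through C D (cp b f) \<Longrightarrow> \<exists>g\<in>H M Y. b = cp g m"
  shows "bij_betw (\<lambda>\<gamma>. qcmp C D \<gamma> (qcls C D m)) (qhom C D M Y)
    {\<beta> \<in> qhom C D B Y. qcmp C D \<beta> (qcls C D f) = qcls C D (zr A Y)}"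
proof -
  let ?F = "\<lambda>\<gamma>. qcmp C D \<gamma> (qcls C D m)"
  have img: "?F (qcls C D g) = qcls C D (cp g m)" if "g \<in> H M Y" for g
    using qcmp_qcls[OF D m that] by simp
  have killed: "qcmp C D (qcls C D b) (qcls C D f) = qcls C D (zr A Y) \<longleftrightarrow> factors_through C D (cp b f)"
    if b: "b \<in> H B Y" for b
    using qcmp_qcls[OF D f b] qcls_eq_zr_iff[OF D comp_hom[OF f b]] by simp
  have "?F ` qhom C D M Y = {\<beta> \<in> qhom C D B Y. qcmp C D \<beta> (qcls C D f) = qcls C D (zr A Y)}"
  proof (intro set_eqI iffI)
    fix z assume "z \<in> ?F ` qhom C D M Y"
    then obtain g where g: "g \<in> H M Y" and "z = ?F (qcls C D g)" unfolding qhom_eq_image by blast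
    hence z: "z = qcls C D (cp g m)" using img by simp
    have "factors_through C D (cp (cp g m) f)"
      using factors_through_comp_left[OF comp_hom[OF f m] mf g] comp_assoc[OF f m g] by simp
    hence "qcmp C D z (qcls C D f) = qcls C D (zr A Y)" using z killed[OF comp_hom[OF m g]] by simp
    moreover have "z \<in> qhom C D B Y" using z comp_hom[OF m g] unfolding qhom_eq_image by blast
    ultimately show "z \<in> {\<beta> \<in> qhom C D B Y. qcmp C D \<beta> (qcls C D f) = qcls C D (zr A Y)}" by blast
  next
    fix z assume "z \<in> {\<beta> \<in> qhom C D B Y. qcmp C D \<beta> (qcls C D f) = qcls C D (zr A Y)}"
    then obtain b where b: "b \<in> H B Y" and z: "z = qcls C D b"
      and "qcmp C D z (qcls C D f) = qcls C D (zr A Y)"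
      unfolding qhom_eq_image by blast
    hence "factors_through C D (cp b f)" using killed by simp
    then obtain g where g: "g \<in> H M Y" and "b = cp g m" using lift b by blast
    hence "z = ?F (qcls C D g)" using img z by simp
    thus "z \<in> ?F ` qhom C D M Y" using g unfolding qhom_eq_image by blast
  qed
  thus ?thesis unfolding bij_betw_def using inj_on_qcmp_qcls[OF D m faithful] by blast
qed

section \<open>Cotorsion pairs\<close>

lemma ext1_zeroD: "ext1_zero C D E \<Longrightarrow> X \<in> D \<Longrightarrow> Y \<in> E \<Longrightarrow> g \<in> H X (sh Y) \<Longrightarrow> g = zr X (sh Y)"
  unfolding ext1_zero_def by blast

lemma ext1_zero_unshiftD:
  assumes e: "ext1_zero C D E" and X: "sh X \<in> D" and Y: "Y \<in> E" and g: "g \<in> H X Y"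
  shows "g = zr X Y"
  using ext1_zeroD[OF e X Y shm_hom[OF g]] shm_eq_zr_iff[OF g] by blast

lemma cotorsion_pair_mem_left:
  assumes cpr: "cotorsion_pair C P Q" and E: "E \<in> Ob"
    and orth: "\<And>Q0 y. Q0 \<in> Q \<Longrightarrow> y \<in> H E (sh Q0) \<Longrightarrow> y = zr E (sh Q0)"
  shows "E \<in> P"
proof -
  have sP: "subcat C P" and sQ: "subcat C Q" and st: "Ob = star C P (sh ` Q)"
    using cpr unfolding cotorsion_pair_def by auto
  obtain u v w Q0 where t: "(u, v, w) \<in> ttri C" and P0: "tdm C u \<in> P" and "tcd C u = E"
    and Q0: "Q0 \<in> Q" and "tcd C v = sh Q0"
    using E st unfolding star_def by blast
  hence u: "u \<in> H (tdm C u) E" and v: "v \<in> H E (sh Q0)" and w: "w \<in> H (sh Q0) (sh (tdm C u))"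
    using tri_homs[OF t] by simp_all
  have "tdm C u \<in> Ob" and "Q0 \<in> Ob" using P0 Q0 sP sQ subcat_obj by auto
  then obtain a where a: "a \<in> H Q0 (tdm C u)" and sa: "shm a = ng w"
    using shm_full ng_hom[OF w] by blast
  have "(a, u, v) \<in> ttri C"
    by (rule tri_rotate_back[OF _ a u v]) (use t sa ng_ng[OF w] in simp)
  then obtain s r where "is_biprod C (tdm C u) E Q0 s a u r"
    using tri_split_of_zero[OF _ a u] orth[OF Q0 v] by blast
  thus ?thesis using sP P0 unfolding subcat_def by blast
qed

text \<open>A cotorsion pair (P, Q), i.e. C = P * Q[1], also yields C = P[-1] * Q: decompose E[1] and
  shift back; the cone N of the resulting map E \<rightarrow> T1 lies in P, being Ext-orthogonal to Q.\<close>

lemma cotorsion_pair_shifted_decomposition: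
  assumes cpr: "cotorsion_pair C P Q"
  shows "Ob = star C (shift_inv C P) Q"
proof (intro equalityI subsetI)
  fix E assume E: "E \<in> Ob"
  have sP: "subcat C P" and sQ: "subcat C Q" and st: "Ob = star C P (sh ` Q)"
    and ePQ: "ext1_zero C P Q"
    using cpr unfolding cotorsion_pair_def by auto
  obtain u0 v0 w0 T1 where t: "(u0, v0, w0) \<in> ttri C" and S1: "tdm C u0 \<in> P"
    and "tcd C u0 = sh E" and T1: "T1 \<in> Q" and "tcd C v0 = sh T1"
    using sh_obj[OF E] st unfolding star_def by blast
  hence u0: "u0 \<in> H (tdm C u0) (sh E)" and v0: "v0 \<in> H (sh E) (sh T1)"
    and w0: "w0 \<in> H (sh T1) (sh (tdm C u0))"
    using tri_homs[OF t] by simp_all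
  have S1o: "tdm C u0 \<in> Ob" and T1o: "T1 \<in> Ob" using S1 T1 sP sQ subcat_obj by auto
  obtain v where v: "v \<in> H E T1" and sv: "shm v = v0" using shm_full[OF E T1o v0] by blast
  obtain w x where tv: "(v, w, x) \<in> ttri C" using tri_exists[OF v] by blast
  hence w: "w \<in> H T1 (tcd C w)" using tri_homs(2) hom_cod[OF v] by metis
  have NP: "tcd C w \<in> P"
  proof (rule cotorsion_pair_mem_left[OF cpr])
    show "tcd C w \<in> Ob" using w hom_obj by blast
  next
    fix T' y assume T': "T' \<in> Q" and y: "y \<in> H (tcd C w) (sh T')"
    have T'o: "T' \<in> Ob" using T' sQ subcat_obj by blast
    have "shm y = zr (sh (tcd C w)) (sh (sh T'))"
    proof (rule tri_cone_hom_zero_transfer[OF _ tri_rotate[OF t] v0 shm_hom[OF w] w0 _ shm_hom[OF y]])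
      show "(v0, shm w, ng (shm x)) \<in> ttri C" using tri_shift[OF tv v w] sv by simp
    next
      fix h assume h: "h \<in> H (sh (tdm C u0)) (sh (sh T'))"
      then obtain z where z: "z \<in> H (tdm C u0) (sh T')" and "shm z = h"
        using shm_full[OF S1o sh_obj[OF T'o]] by blast
      thus "h = zr (sh (tdm C u0)) (sh (sh T'))"
        using ext1_zeroD[OF ePQ S1 T' z] shm_zr[OF S1o sh_obj[OF T'o]] by simp
    qed
    thus "y = zr (tcd C w) (sh T')" using shm_eq_zr_iff[OF y] by blast
  qed
  obtain X u w' where X: "X \<in> Ob" and u: "u \<in> H X E" and tu: "(u, v, w') \<in> ttri C"
    and "isomorphic C (tcd C w) (sh X)"
    using tri_rotate_back_exists[OF tv v w] by blast
  hence "X \<in> shift_inv C P" using NP sP X unfolding subcat_def shift_inv_def by blast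
  moreover have "tcd C v \<in> Q" using hom_cod[OF v] T1 by simp
  ultimately show "E \<in> star C (shift_inv C P) Q"
    unfolding star_def using E tu hom_dom[OF u] hom_cod[OF u] by blast
qed (simp add: star_def)

end

section \<open>Twin cotorsion pairs\<close>

locale twin_cotorsion_setting = triangulated_cat +
  fixes S T U V
  assumes twin: "twin_cotorsion_pair C S T U V"
begin

abbreviation "W \<equiv> T \<inter> U"

lemma cotorsion_ST: "cotorsion_pair C S T" and cotorsion_UV: "cotorsion_pair C U V"
  and ext1_zero_SV: "ext1_zero C S V"
  using twin unfolding twin_cotorsion_pair_def by auto

lemma ext1_zero_ST: "ext1_zero C S T" and ext1_zero_UV: "ext1_zero C U V"
  using cotorsion_ST cotorsion_UV unfolding cotorsion_pair_def by auto

lemma subcat_W: "subcat C W"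
  using subcat_Int cotorsion_ST cotorsion_UV unfolding cotorsion_pair_def by blast

text \<open>Up to a part b a' through W, g kills m and hence factors over t through X[1]; for
  Y \<in> C+ every map from X[1] \<in> S into Y factors through W, as Ext1(S, V) = 0.\<close>

lemma factors_through_W_cancel:
  assumes SX: "sh X \<in> S" and t: "(h, m, t) \<in> ttri C" and h: "h \<in> H X B" and m: "m \<in> H B M"
    and Y: "Y \<in> Cplus C T U V" and g: "g \<in> H M Y" and gm: "factors_through C W (cp g m)"
  shows "factors_through C W g"
proof -
  obtain u1 v1 w1 V1 where tY: "(u1, v1, w1) \<in> ttri C" and W1: "tdm C u1 \<in> W" and "tcd C u1 = Y"
    and V1: "V1 \<in> V" and "tcd C v1 = sh V1"
    using Y unfolding Cplus_def star_def by blast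
  hence u1: "u1 \<in> H (tdm C u1) Y" and v1: "v1 \<in> H Y (sh V1)" using tri_homs[OF tY] by simp_all
  have th: "t \<in> H M (sh X)" using tri_third_hom[OF t h m] .
  obtain W0 a b where W0: "W0 \<in> W" and a: "a \<in> H B W0" and b: "b \<in> H W0 Y" and gab: "cp g m = cp b a"
    using factors_throughD[OF comp_hom[OF m g] gm] by blast
  have "cp a h = zr X W0" using ext1_zero_unshiftD[OF ext1_zero_ST SX _ comp_hom[OF h a]] W0 by blast
  then obtain a' where a': "a' \<in> H M W0" and aa: "a = cp a' m" using tri_weak_cokernel[OF t h m a] by blast
  define k where "k = pl g (ng (cp b a'))"
  have ba': "cp b a' \<in> H M Y" using a' b by blast
  have kh: "k \<in> H M Y" using k_def g ba' by blast
  have "cp k m = pl (cp g m) (ng (cp (cp b a') m))"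
    unfolding k_def using comp_pl_left[OF m g ng_hom[OF ba']] comp_ng_left[OF m ba'] by simp
  hence "cp k m = zr B Y" using gab aa comp_assoc[OF m a' b] pl_ng comp_hom[OF a b] by simp
  then obtain c where c: "c \<in> H (sh X) Y" and kc: "k = cp c t"
    using tri_weak_cokernel[OF tri_rotate[OF t] m th kh] by blast
  have "cp v1 c = zr (sh X) (sh V1)" using ext1_zeroD[OF ext1_zero_SV SX V1] comp_hom[OF c v1] by blast
  then obtain c' where "c' \<in> H (sh X) (tdm C u1)" and "c = cp u1 c'"
    using tri_weak_kernel[OF tY u1 v1 c] by blast
  hence "factors_through C W k" using factors_through_comp_right[OF c _ th] factors_throughI W1 u1 kc
    by metis
  moreover have "pl k (cp b a') = g"
    unfolding k_def using pl_assoc[OF g ng_hom[OF ba'] ba'] pl_comm[OF ng_hom[OF ba'] ba'] pl_ng[OF ba']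
      pl_zr[OF g] by simp
  ultimately show ?thesis using factors_through_pl[OF subcat_W kh _ ba' factors_throughI[OF W0 a' b]] by simp
qed

lemma lift_through_cone:
  assumes SX: "sh X \<in> S" and t: "(cp f s, m, t) \<in> ttri C" and s: "s \<in> H X A" and f: "f \<in> H A B"
    and m: "m \<in> H B M" and b: "b \<in> H B Y" and bf: "factors_through C W (cp b f)"
  shows "\<exists>g\<in>H M Y. b = cp g m"
proof -
  obtain W0 x y where W0: "W0 \<in> W" and x: "x \<in> H A W0" and y: "y \<in> H W0 Y" and bfe: "cp b f = cp y x"
    using factors_throughD[OF comp_hom[OF f b] bf] by blast
  have "cp x s = zr X W0" using ext1_zero_unshiftD[OF ext1_zero_ST SX _ comp_hom[OF s x]] W0 by blast
  moreover have "cp b (cp f s) = cp y (cp x s)" using comp_assoc[OF s f b] comp_assoc[OF s x y] bfe by simp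
  ultimately have "cp b (cp f s) = zr X Y" using y s hom_obj by simp
  thus ?thesis using tri_weak_cokernel[OF t comp_hom[OF s f] m b] by blast
qed

lemma comp_Cminus_T_shift_V_zero:
  assumes B: "B \<in> Cminus C S T U" and T1: "T1 \<in> T" and V1: "V1 \<in> V"
    and k: "k \<in> H B T1" and y: "y \<in> H T1 (sh V1)"
  shows "cp y k = zr B (sh V1)"
proof -
  obtain s v w where tB: "(s, v, w) \<in> ttri C" and SX: "sh (tdm C s) \<in> S" and "tcd C s = B"
    and WB: "tcd C v \<in> W"
    using B unfolding Cminus_def star_def shift_inv_def by blast
  hence s: "s \<in> H (tdm C s) B" and v: "v \<in> H B (tcd C v)" using tri_homs[OF tB] by simp_all
  have "cp k s = zr (tdm C s) T1" using ext1_zero_unshiftD[OF ext1_zero_ST SX T1 comp_hom[OF s k]] .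
  then obtain k' where k': "k' \<in> H (tcd C v) T1" and kk: "k = cp k' v"
    using tri_weak_cokernel[OF tB s v k] by blast
  have "cp y k' = zr (tcd C v) (sh V1)"
    using ext1_zeroD[OF ext1_zero_UV _ V1 comp_hom[OF k' y]] WB by blast
  thus ?thesis using kk comp_assoc[OF v k' y] comp_zr_left[OF v] conjunct2[OF hom_obj[OF y]] by simp
qed

lemma cone_in_Cminus:
  assumes SX: "sh X \<in> S" and t: "(h, m, t) \<in> ttri C" and h: "h \<in> H X B" and m: "m \<in> H B M"
    and B: "B \<in> Cminus C S T U"
  shows "M \<in> Cminus C S T U"
proof -
  have M: "M \<in> Ob" using m hom_obj by blast
  then obtain a b c where tM: "(a, b, c) \<in> ttri C" and SX': "sh (tdm C a) \<in> S"
    and "tcd C a = M" and T1: "tcd C b \<in> T"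
    using cotorsion_pair_shifted_decomposition[OF cotorsion_ST] unfolding star_def shift_inv_def by blast
  hence a: "a \<in> H (tdm C a) M" and b: "b \<in> H M (tcd C b)" using tri_homs[OF tM] by simp_all
  have "tcd C b \<in> U"
  proof (rule cotorsion_pair_mem_left[OF cotorsion_UV])
    show "tcd C b \<in> Ob" using b hom_obj by blast
  next
    fix V1 y assume V1: "V1 \<in> V" and y: "y \<in> H (tcd C b) (sh V1)"
    have yb: "cp y b \<in> H M (sh V1)" using y b by blast
    have "cp (cp y b) m = zr B (sh V1)"
      using comp_Cminus_T_shift_V_zero[OF B T1 V1 comp_hom[OF m b] y] comp_assoc[OF m b y] by simp
    then obtain y' where y': "y' \<in> H (sh X) (sh V1)" and "cp y b = cp y' t"
      using tri_weak_cokernel[OF tri_rotate[OF t] m tri_third_hom[OF t h m] yb] by blast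
    hence "cp y b = zr M (sh V1)"
      using ext1_zeroD[OF ext1_zero_SV SX V1 y'] comp_zr_left[OF tri_third_hom[OF t h m]]
        conjunct2[OF hom_obj[OF y]] by simp
    then obtain y'' where y'': "y'' \<in> H (sh (tdm C a)) (sh V1)" and "y = cp y'' c"
      using tri_weak_cokernel[OF tri_rotate[OF tM] b tri_third_hom[OF tM a b] y] by blast
    thus "y = zr (tcd C b) (sh V1)"
      using ext1_zeroD[OF ext1_zero_SV SX' V1 y''] comp_zr_left[OF tri_third_hom[OF tM a b]]
        conjunct2[OF hom_obj[OF y]] by simp
  qed
  thus ?thesis unfolding Cminus_def star_def shift_inv_def
    using M tM T1 SX' \<open>tcd C a = M\<close> a hom_obj by blast
qed

end

theorem proposition4p2:
  fixes C :: "('o, 'm) tcat" and S T U V :: "'o set"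
    and A B X WA MF :: 'o and f sA wA tA mf t :: 'm
  assumes tri: "triangulated C"
    and twin: "twin_cotorsion_pair C S T U V"
    and A: "A \<in> Cminus C S T U" and B: "B \<in> tobj C" and f: "f \<in> hom C A B"
    and SA: "tsh C X \<in> S" and WA: "WA \<in> T \<inter> U"
    and t1: "(sA, wA, tA) \<in> ttri C" and sA: "sA \<in> hom C X A" and wA: "wA \<in> hom C A WA"
    and t2: "(tcmp C f sA, mf, t) \<in> ttri C" and mf: "mf \<in> hom C B MF"
  shows "qcmp C (T \<inter> U) (qcls C (T \<inter> U) mf) (qcls C (T \<inter> U) f) = qcls C (T \<inter> U) (tzr C A MF)
       \<and> (\<forall>Y \<in> Cplus C T U V.
           bij_betw (\<lambda>\<gamma>. qcmp C (T \<inter> U) \<gamma> (qcls C (T \<inter> U) mf))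
             (qhom C (T \<inter> U) MF Y)
             {\<beta> \<in> qhom C (T \<inter> U) B Y. qcmp C (T \<inter> U) \<beta> (qcls C (T \<inter> U) f) = qcls C (T \<inter> U) (tzr C A Y)})
       \<and> (B \<in> Cminus C S T U \<longrightarrow> MF \<in> Cminus C S T U)"
proof -
  interpret twin_cotorsion_setting C S T U V
    using tri twin by (simp add: twin_cotorsion_setting_def twin_cotorsion_setting_axioms_def
        triangulated_cat_def)
  have fs: "cp f sA \<in> H X B" using sA f by blast
  have "cp (cp mf f) sA = zr X MF" using tri_comp_zero[OF t2 fs mf] comp_assoc[OF sA f mf] by simp
  then obtain h where "h \<in> H WA MF" and "cp mf f = cp h wA"
    using tri_weak_cokernel[OF t1 sA wA comp_hom[OF f mf]] by blast
  hence mf_f: "factors_through C W (cp mf f)" using factors_throughI[OF WA wA] by simp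
  have "bij_betw (\<lambda>\<gamma>. qcmp C W \<gamma> (qcls C W mf)) (qhom C W MF Y)
      {\<beta> \<in> qhom C W B Y. qcmp C W \<beta> (qcls C W f) = qcls C W (zr A Y)}"
    if "Y \<in> Cplus C T U V" for Y
    by (rule bij_betw_qcmp_weak_cokernel[OF subcat_W f mf mf_f])
      (use factors_through_W_cancel[OF SA t2 fs mf that] lift_through_cone[OF SA t2 sA f mf] in blast)+
  moreover have "qcmp C W (qcls C W mf) (qcls C W f) = qcls C W (zr A MF)"
    using qcmp_qcls[OF subcat_W f mf] qcls_eq_zr_iff[OF subcat_W comp_hom[OF f mf]] mf_f by simp
  ultimately show ?thesis using cone_in_Cminus[OF SA t2 fs mf] by blast
qed

end
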